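(* Let $g(T)=\sum_{i\in\mathbb{Z}}a_iT^i\in\mathcal{E}_K$. If $\mathrm{Ray}(\partial_T-g(T),1)>\omega$, then $|a_i|<1$ for all $i\le-1$.
   Context: $K$ is a field of characteristic $0$, complete for a non-archimedean absolute value, residue field of characteristic $p>0$; $\omega=|p|^{1/(p-1)}$. $\mathcal{E}_K$ is the ring of Laurent series $\sum a_iT^i$ over $K$ with $\sup|a_i|<\infty$ and $|a_i|\to0$ as $i\to-\infty$, Gauss norm $|\cdot|_1=\sup|a_i|$. $\partial_T=T\frac d{dT}$. For $g\in\mathcal{E}_K$: $g_{[0]}=1$, $g_{[1]}=g/T$, $g_{[k+1]}=\frac d{dT}(g_{[k]})+g_{[k]}g_{[1]}$, and $\mathrm{Ray}(\partial_T-g,1)=\min\big(1,\liminf_k(|g_{[k]}|_1/|k!|)^{-1/k}\big)$. *)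

theory Defs
  imports Complex_Main "HOL-Computational_Algebra.Primes" "HOL-Library.Extended_Real" "HOL-Library.Liminf_Limsup"
begin

definition nonarch_av :: "('k::field \<Rightarrow> real) \<Rightarrow> bool" where
  "nonarch_av av \<longleftrightarrow> (\<forall>x. 0 \<le> av x) \<and> (\<forall>x. av x = 0 \<longleftrightarrow> x = 0)
     \<and> (\<forall>x y. av (x * y) = av x * av y) \<and> (\<forall>x y. av (x + y) \<le> max (av x) (av y))"

definition av_tendsto :: "('k::field \<Rightarrow> real) \<Rightarrow> (nat \<Rightarrow> 'k) \<Rightarrow> 'k \<Rightarrow> bool" where
  "av_tendsto av X L \<longleftrightarrow> (\<forall>e>0. \<exists>N. \<forall>n\<ge>N. av (X n - L) < e)"

definition av_complete :: "('k::field \<Rightarrow> real) \<Rightarrow> bool" where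
  "av_complete av \<longleftrightarrow> (\<forall>X. (\<forall>e>0. \<exists>N. \<forall>m\<ge>N. \<forall>n\<ge>N. av (X m - X n) < e)
       \<longrightarrow> (\<exists>L. av_tendsto av X L))"

definition av_sum :: "('k::field \<Rightarrow> real) \<Rightarrow> (int \<Rightarrow> 'k) \<Rightarrow> 'k" where
  "av_sum av c = (THE L. av_tendsto av (\<lambda>N::nat. \<Sum>i\<in>{- int N..int N}. c i) L)"

text \<open>Laurent series \<open>\<Sum> a_i T^i\<close> represented by coefficient functions \<open>int \<Rightarrow> 'k\<close>.\<close>
definition in_EK :: "('k::field \<Rightarrow> real) \<Rightarrow> (int \<Rightarrow> 'k) \<Rightarrow> bool" where
  "in_EK av f \<longleftrightarrow> bdd_above (range (\<lambda>i. av (f i))) \<and> ((\<lambda>i. av (f i)) \<longlongrightarrow> 0) at_bot"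

definition gauss_norm :: "('k::field \<Rightarrow> real) \<Rightarrow> (int \<Rightarrow> 'k) \<Rightarrow> real" where
  "gauss_norm av f = (SUP i. av (f i))"

definition lmult :: "('k::field \<Rightarrow> real) \<Rightarrow> (int \<Rightarrow> 'k) \<Rightarrow> (int \<Rightarrow> 'k) \<Rightarrow> (int \<Rightarrow> 'k)" where
  "lmult av f g = (\<lambda>n. av_sum av (\<lambda>i. f i * g (n - i)))"

definition lderiv :: "(int \<Rightarrow> 'k::field) \<Rightarrow> (int \<Rightarrow> 'k)" where
  "lderiv f = (\<lambda>n. of_int (n + 1) * f (n + 1))"

definition ldivT :: "(int \<Rightarrow> 'k::field) \<Rightarrow> (int \<Rightarrow> 'k)" where
  "ldivT f = (\<lambda>n. f (n + 1))"

definition lone :: "int \<Rightarrow> 'k::field" where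
  "lone = (\<lambda>n. if n = 0 then 1 else 0)"

text \<open>\<open>g_[0] = 1\<close>, \<open>g_[k+1] = d/dT g_[k] + g_[k] g_[1]\<close>, with \<open>g_[1] = g/T\<close>
  (the recursion at \<open>k = 0\<close> gives exactly \<open>g/T\<close>).\<close>
primrec gbr :: "('k::field \<Rightarrow> real) \<Rightarrow> (int \<Rightarrow> 'k) \<Rightarrow> nat \<Rightarrow> (int \<Rightarrow> 'k)" where
  "gbr av g 0 = lone"
| "gbr av g (Suc k) = (\<lambda>n. lderiv (gbr av g k) n + lmult av (gbr av g k) (ldivT g) n)"

definition ray :: "('k::field \<Rightarrow> real) \<Rightarrow> (int \<Rightarrow> 'k) \<Rightarrow> ereal" where
  "ray av g = min 1 (liminf (\<lambda>k. if gauss_norm av (gbr av g k) = 0 then \<infinity>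
      else ereal ((gauss_norm av (gbr av g k) / av (of_nat (fact k))) powr (- 1 / real k))))"

end

theory Submission
  imports Defs
begin

text \<open>
  Suppose \<open>|a_j| \<ge> 1\<close> for some \<open>j \<le> -1\<close>; we show \<open>|g_[k]|_1 \<ge> 1\<close> for all \<open>k\<close>.
  If some coefficient of \<open>g\<close> has absolute value \<open>> 1\<close>, then \<open>|g/T|_1 > 1\<close>. Since
  \<open>d/dT\<close> does not increase the Gauss norm while \<open>|f g/T|_1 \<ge> |f|_1 |g/T|_1\<close>, the product
  term dominates in the recursion, and \<open>|g_[k]|_1 \<ge> |g/T|_1^k\<close>.
  Otherwise \<open>g\<close> has integral coefficients; let \<open>m \<le> -1\<close> be the least index with
  \<open>|a_m| = 1\<close>. Modulo the maximal ideal, the lowest term of \<open>g_[k]\<close> is \<open>a_m^k T^(k(m-1))\<close>: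
  it comes from the product with \<open>g/T\<close>, whose lowest term has degree \<open>m - 1 \<le> -2\<close>, so the
  derivative only contributes in higher degrees.
  Finally, for \<open>k = p^n\<close> one has \<open>|k!| \<le> |p|^((k-1)/(p-1))\<close>, so along this subsequence
  \<open>(|g_[k]|_1/|k!|)^(-1/k) \<le> |k!|^(1/k)\<close> tends to at most \<open>|p|^(1/(p-1)) = \<omega>\<close>.
\<close>

section \<open>Non-archimedean absolute values\<close>

locale nonarch_absval =
  fixes av :: "'k::field \<Rightarrow> real"
  assumes nonarch: "nonarch_av av"
begin

lemma av_nonneg [simp]: "0 \<le> av x"
  using nonarch unfolding nonarch_av_def by blast

lemma av_eq_0_iff [simp]: "av x = 0 \<longleftrightarrow> x = 0"
  using nonarch unfolding nonarch_av_def by blast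

lemma av_mult [simp]: "av (x * y) = av x * av y"
  using nonarch unfolding nonarch_av_def by blast

lemma av_add_le_max: "av (x + y) \<le> max (av x) (av y)"
  using nonarch unfolding nonarch_av_def by blast

lemma av_zero [simp]: "av 0 = 0"
  by simp

lemma av_pos: "x \<noteq> 0 \<Longrightarrow> 0 < av x"
  using av_nonneg[of x] av_eq_0_iff[of x] by linarith

lemma av_one [simp]: "av 1 = 1"
proof -
  have "av 1 * av 1 = av 1 * 1"
    using av_mult[of 1 1] by simp
  then show ?thesis
    by (subst (asm) mult_left_cancel) simp_all
qed

lemma av_minus [simp]: "av (- x) = av x"
proof -
  have "av (- 1) * av (- 1) = 1"
    using av_mult[of "- 1" "- 1"] by simp
  then have "av (- 1) ^ 2 = 1"
    by (simp add: power2_eq_square)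
  then have "av (- 1) = 1"
    using av_nonneg[of "- 1"] by (simp add: power2_eq_1_iff)
  then show ?thesis
    using av_mult[of "- 1" x] by simp
qed

lemma av_diff_le_max: "av (x - y) \<le> max (av x) (av y)"
  using av_add_le_max[of x "- y"] by simp

lemma av_diff_commute: "av (x - y) = av (y - x)"
  by (metis av_minus minus_diff_eq)

lemma av_power [simp]: "av (x ^ n) = av x ^ n"
  by (induction n) auto

lemma av_add_le: "av x \<le> B \<Longrightarrow> av y \<le> B \<Longrightarrow> av (x + y) \<le> B"
  using av_add_le_max[of x y] by linarith

lemma av_add_less: "av x < B \<Longrightarrow> av y < B \<Longrightarrow> av (x + y) < B"
  using av_add_le_max[of x y] by linarith

lemma av_add_eq_left:
  assumes "av y < av x"
  shows "av (x + y) = av x"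
proof -
  have "av x \<le> max (av (x + y)) (av y)"
    using av_diff_le_max[of "x + y" y] by simp
  then show ?thesis
    using assms av_add_le_max[of x y] by linarith
qed

lemma av_mult_less:
  assumes "av x < e / B" and "av y \<le> B" and "0 < B"
  shows "av (x * y) < e"
proof -
  have "av x * av y \<le> av x * B"
    using assms(2) by (simp add: mult_left_mono)
  also have "\<dots> < e"
    using assms(1,3) by (simp add: pos_less_divide_eq)
  finally show ?thesis
    by simp
qed

lemma av_mult_less_one: "av x < 1 \<Longrightarrow> av y \<le> 1 \<Longrightarrow> av (x * y) < 1"
  using mult_left_le[of "av y" "av x"] by simp

lemma av_of_nat_le_one: "av (of_nat n) \<le> 1"
  by (induction n) (auto intro: av_add_le)

lemma av_of_int_le_one: "av (of_int z) \<le> 1"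
  using av_of_nat_le_one[of "nat \<bar>z\<bar>"] by (cases "0 \<le> z") simp_all

lemma av_finite_sum_le:
  "finite A \<Longrightarrow> 0 \<le> B \<Longrightarrow> (\<And>i. i \<in> A \<Longrightarrow> av (c i) \<le> B) \<Longrightarrow> av (sum c A) \<le> B"
  by (induction A rule: finite_induct) (auto intro: av_add_le)

lemma av_tendsto_unique:
  assumes "av_tendsto av X L1" and "av_tendsto av X L2"
  shows "L1 = L2"
proof (rule ccontr)
  assume "L1 \<noteq> L2"
  then have e: "0 < av (L1 - L2)"
    by (simp add: av_pos)
  obtain N1 where N1: "\<forall>n\<ge>N1. av (X n - L1) < av (L1 - L2)"
    using assms(1) e unfolding av_tendsto_def by blast
  obtain N2 where N2: "\<forall>n\<ge>N2. av (X n - L2) < av (L1 - L2)"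
    using assms(2) e unfolding av_tendsto_def by blast
  define n where "n = max N1 N2"
  have "L1 - L2 = (X n - L2) - (X n - L1)"
    by simp
  then have "av (L1 - L2) \<le> max (av (X n - L2)) (av (X n - L1))"
    by (metis av_diff_le_max)
  moreover have "av (X n - L1) < av (L1 - L2)" "av (X n - L2) < av (L1 - L2)"
    using N1 N2 by (simp_all add: n_def)
  ultimately show False
    by linarith
qed

lemma av_tendsto_le:
  assumes "av_tendsto av X L" and "\<And>n. av (X n) \<le> B"
  shows "av L \<le> B"
proof (rule ccontr)
  assume "\<not> av L \<le> B"
  then have "0 < av L - B"
    by simp
  then obtain N where N: "av (X N - L) < av L - B"
    using assms(1) unfolding av_tendsto_def by blast
  have "av L \<le> max (av (X N)) (av (X N - L))"
    using av_diff_le_max[of "X N" "X N - L"] by simp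
  moreover have "0 \<le> B"
    using assms(2)[of N] av_nonneg[of "X N"] by linarith
  ultimately show False
    using N assms(2)[of N] \<open>\<not> av L \<le> B\<close> by (auto simp: max_def split: if_split_asm)
qed

definition null_at_infinity :: "(int \<Rightarrow> 'k) \<Rightarrow> bool" where
  "null_at_infinity c \<longleftrightarrow> (\<forall>e>0. \<exists>N::nat. \<forall>i. int N < \<bar>i\<bar> \<longrightarrow> av (c i) < e)"

lemma null_at_infinity_fun_upd: "null_at_infinity c \<Longrightarrow> null_at_infinity (c(i0 := 0))"
  unfolding null_at_infinity_def by (metis av_zero fun_upd_apply)

lemma null_at_infinity_partial_sums_Cauchy:
  assumes "null_at_infinity c"
  shows "\<forall>e>0. \<exists>M. \<forall>m\<ge>M. \<forall>n\<ge>M.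
    av ((\<Sum>i = - int m..int m. c i) - (\<Sum>i = - int n..int n. c i)) < e"
proof -
  define S where "S = (\<lambda>N. \<Sum>i = - int N..int N. c i)"
  have tail: "av (S m - S n) \<le> e"
    if e: "0 < e" and N: "\<forall>i. int N < \<bar>i\<bar> \<longrightarrow> av (c i) < e" and "N \<le> n" "n \<le> m" for e N m n
  proof -
    have "S m - S n = sum c ({- int m..int m} - {- int n..int n})"
      unfolding S_def using \<open>n \<le> m\<close> by (subst sum_diff) auto
    also have "av \<dots> \<le> e"
    proof (rule av_finite_sum_le)
      fix i
      assume "i \<in> {- int m..int m} - {- int n..int n}"
      then have "int N < \<bar>i\<bar>"
        using \<open>N \<le> n\<close> by auto
      then show "av (c i) \<le> e"
        using N by (simp add: less_imp_le)
    qed (use e in auto)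
    finally show ?thesis .
  qed
  have "\<exists>M. \<forall>m\<ge>M. \<forall>n\<ge>M. av (S m - S n) < e" if "0 < e" for e
  proof -
    obtain N where N: "\<forall>i. int N < \<bar>i\<bar> \<longrightarrow> av (c i) < e / 2"
      using assms \<open>0 < e\<close> unfolding null_at_infinity_def by (meson half_gt_zero)
    have "av (S m - S n) \<le> e / 2" if "N \<le> m" "N \<le> n" for m n
    proof (cases "n \<le> m")
      case True
      show ?thesis
        using tail[OF half_gt_zero[OF \<open>0 < e\<close>] N \<open>N \<le> n\<close> True] .
    next
      case False
      then have "av (S n - S m) \<le> e / 2"
        using tail[OF half_gt_zero[OF \<open>0 < e\<close>] N \<open>N \<le> m\<close>] by simp
      then show ?thesis
        using av_diff_commute[of "S m" "S n"] by linarith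
    qed
    then have "\<forall>m\<ge>N. \<forall>n\<ge>N. av (S m - S n) < e"
      using \<open>0 < e\<close> by (smt (verit, best) field_sum_of_halves)
    then show ?thesis ..
  qed
  then show ?thesis
    unfolding S_def by blast
qed

subsection \<open>The ring \<open>\<E>_K\<close> and the Gauss norm\<close>

lemma in_EK_iff:
  "in_EK av f \<longleftrightarrow> (\<exists>B. \<forall>i. av (f i) \<le> B) \<and> (\<forall>e>0. \<exists>N. \<forall>i<N. av (f i) < e)"
proof -
  have "(\<exists>N. \<forall>i\<le>N. av (f i) < e) \<longleftrightarrow> (\<exists>N. \<forall>i<N. av (f i) < e)" for e
  proof
    show "\<exists>N. \<forall>i<N. av (f i) < e" if le: "\<exists>N. \<forall>i\<le>N. av (f i) < e"
    proof -
      obtain N where "\<forall>i\<le>N. av (f i) < e"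
        using le by blast
      then have "\<forall>i<N. av (f i) < e"
        by simp
      then show ?thesis
        by blast
    qed
    show "\<exists>N. \<forall>i\<le>N. av (f i) < e" if less: "\<exists>N. \<forall>i<N. av (f i) < e"
    proof -
      obtain N where "\<forall>i<N. av (f i) < e"
        using less by blast
      then have "\<forall>i\<le>N - 1. av (f i) < e"
        by simp
      then show ?thesis
        by blast
    qed
  qed
  then have "((\<lambda>i. av (f i)) \<longlongrightarrow> 0) at_bot \<longleftrightarrow> (\<forall>e>0. \<exists>N. \<forall>i<N. av (f i) < e)"
    unfolding tendsto_iff eventually_at_bot_linorder dist_real_def by simp
  then show ?thesis
    unfolding in_EK_def bdd_above_def by auto
qed

lemma in_EK_bounded:
  assumes "in_EK av f"
  obtains B where "0 < B" and "\<And>i. av (f i) \<le> B"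
proof -
  obtain B where "\<forall>i. av (f i) \<le> B"
    using assms unfolding in_EK_iff by blast
  then have "0 < max B 1" and "\<And>i. av (f i) \<le> max B 1"
    by (auto simp: le_max_iff_disj)
  then show ?thesis
    using that by blast
qed

lemma in_EK_tail: "in_EK av f \<Longrightarrow> 0 < e \<Longrightarrow> \<exists>N. \<forall>i<N. av (f i) < e"
  unfolding in_EK_iff by blast

lemma in_EK_least_index:
  assumes f: "in_EK av f" and "0 < e" and "e \<le> av (f j)"
  obtains m where "m \<le> j" and "e \<le> av (f m)" and "\<And>i. i < m \<Longrightarrow> av (f i) < e"
proof -
  obtain N where N: "\<forall>i<N. av (f i) < e"
    using in_EK_tail[OF f \<open>0 < e\<close>] by blast
  then have "N \<le> j"
    using assms(3) by (meson not_le not_less_iff_gr_or_eq order.strict_trans2)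
  define S where "S = {n::nat. e \<le> av (f (N + int n))}"
  have "nat (j - N) \<in> S"
    unfolding S_def using \<open>N \<le> j\<close> assms(3) by simp
  define l where "l = (LEAST n. n \<in> S)"
  have "l \<in> S" "l \<le> nat (j - N)"
    unfolding l_def using \<open>nat (j - N) \<in> S\<close> by (auto intro: LeastI Least_le)
  moreover have "av (f i) < e" if "i < N + int l" for i
  proof (cases "i < N")
    case True
    then show ?thesis
      using N by simp
  next
    case False
    then have "nat (i - N) < l"
      using that by linarith
    then have "nat (i - N) \<notin> S"
      unfolding l_def by (rule not_less_Least)
    then show ?thesis
      using False unfolding S_def by simp
  qed
  ultimately show ?thesis
    using that[of "N + int l"] \<open>N \<le> j\<close> unfolding S_def by simp
qed

lemma in_EK_add:
  assumes "in_EK av f" and "in_EK av g"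
  shows "in_EK av (\<lambda>n. f n + g n)"
proof -
  obtain Bf Bg where "\<And>i. av (f i) \<le> Bf" and "\<And>i. av (g i) \<le> Bg"
    using in_EK_bounded[OF assms(1)] in_EK_bounded[OF assms(2)] by metis
  then have "av (f i + g i) \<le> max Bf Bg" for i
    by (intro av_add_le) (auto simp: le_max_iff_disj)
  moreover have "\<exists>N. \<forall>i<N. av (f i + g i) < e" if "0 < e" for e
  proof -
    obtain N1 N2 where "\<forall>i<N1. av (f i) < e" and "\<forall>i<N2. av (g i) < e"
      using in_EK_tail[OF assms(1) \<open>0 < e\<close>] in_EK_tail[OF assms(2) \<open>0 < e\<close>] by blast
    then show ?thesis
      by (intro exI[of _ "min N1 N2"]) (auto intro: av_add_less)
  qed
  ultimately show ?thesis
    unfolding in_EK_iff by blast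
qed

lemma av_lderiv_le: "av (lderiv f n) \<le> av (f (n + 1))"
  unfolding lderiv_def using av_of_int_le_one[of "n + 1"] by (simp add: mult_left_le_one_le)

lemma in_EK_lderiv:
  assumes "in_EK av f"
  shows "in_EK av (lderiv f)"
proof -
  obtain B where "\<And>i. av (f i) \<le> B"
    using in_EK_bounded[OF assms] by metis
  then have "av (lderiv f n) \<le> B" for n
    using av_lderiv_le order_trans by blast
  moreover have "\<exists>N. \<forall>i<N. av (lderiv f i) < e" if "0 < e" for e
  proof -
    obtain N where "\<forall>i<N. av (f i) < e"
      using in_EK_tail[OF assms \<open>0 < e\<close>] by blast
    then have "av (lderiv f i) < e" if "i < N - 1" for i
    proof -
      have "av (f (i + 1)) < e"
        using \<open>\<forall>i<N. av (f i) < e\<close> that by simp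
      then show ?thesis
        using av_lderiv_le[of f i] by linarith
    qed
    then show ?thesis
      by blast
  qed
  ultimately show ?thesis
    unfolding in_EK_iff by blast
qed

lemma in_EK_ldivT:
  assumes "in_EK av f"
  shows "in_EK av (ldivT f)"
proof -
  have "\<exists>B. \<forall>i. av (ldivT f i) \<le> B"
    using assms unfolding in_EK_iff ldivT_def by blast
  moreover have "\<exists>N. \<forall>i<N. av (ldivT f i) < e" if "0 < e" for e
  proof -
    obtain N where "\<forall>i<N. av (f i) < e"
      using in_EK_tail[OF assms \<open>0 < e\<close>] by blast
    then show ?thesis
      unfolding ldivT_def by (intro exI[of _ "N - 1"]) auto
  qed
  ultimately show ?thesis
    unfolding in_EK_iff by blast
qed

lemma in_EK_lone: "in_EK av lone"
  unfolding in_EK_iff lone_def by (intro conjI exI[of _ 1] allI impI exI[of _ 0]) simp_all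

lemma gauss_norm_ge_coeff: "in_EK av f \<Longrightarrow> av (f i) \<le> gauss_norm av f"
  unfolding gauss_norm_def in_EK_def by (intro cSUP_upper) auto

lemma gauss_norm_le: "(\<And>i. av (f i) \<le> B) \<Longrightarrow> gauss_norm av f \<le> B"
  unfolding gauss_norm_def by (intro cSUP_least) auto

lemma gauss_norm_nonneg: "in_EK av f \<Longrightarrow> 0 \<le> gauss_norm av f"
  using gauss_norm_ge_coeff[of f 0] av_nonneg[of "f 0"] by linarith

lemma gauss_norm_less_coeff:
  assumes "in_EK av f" and "s < gauss_norm av f"
  obtains i where "s < av (f i)"
  using assms unfolding gauss_norm_def in_EK_def by (auto simp: less_cSUP_iff)

lemma gauss_norm_add_dominant:
  assumes f: "in_EK av f" and g: "in_EK av g" and less: "gauss_norm av f < gauss_norm av g"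
  shows "gauss_norm av (\<lambda>n. f n + g n) = gauss_norm av g"
proof (rule antisym)
  show "gauss_norm av (\<lambda>n. f n + g n) \<le> gauss_norm av g"
  proof (intro gauss_norm_le av_add_le)
    show "av (f i) \<le> gauss_norm av g" for i
      using gauss_norm_ge_coeff[OF f, of i] less by linarith
    show "av (g i) \<le> gauss_norm av g" for i
      using gauss_norm_ge_coeff[OF g] .
  qed
  show "gauss_norm av g \<le> gauss_norm av (\<lambda>n. f n + g n)"
  proof (rule ccontr)
    assume "\<not> ?thesis"
    then have "max (gauss_norm av (\<lambda>n. f n + g n)) (gauss_norm av f) < gauss_norm av g"
      using less by simp
    then obtain i where i: "max (gauss_norm av (\<lambda>n. f n + g n)) (gauss_norm av f) < av (g i)"
      by (rule gauss_norm_less_coeff[OF g])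
    then have "av (f i) < av (g i)"
      using gauss_norm_ge_coeff[OF f, of i] by linarith
    then have "av (f i + g i) = av (g i)"
      using av_add_eq_left by (simp add: add.commute)
    moreover have "av (f i + g i) \<le> gauss_norm av (\<lambda>n. f n + g n)"
      using gauss_norm_ge_coeff[OF in_EK_add[OF f g]] by simp
    ultimately show False
      using i by linarith
  qed
qed

text \<open>
  \<open>reduction_lowest_term f K c\<close>: the coefficients of \<open>f\<close> lie in the valuation ring and,
  modulo its maximal ideal, \<open>f\<close> has lowest-order term \<open>c T\<^sup>K\<close>.
\<close>
definition reduction_lowest_term :: "(int \<Rightarrow> 'k) \<Rightarrow> int \<Rightarrow> 'k \<Rightarrow> bool" where
  "reduction_lowest_term f K c \<longleftrightarrow>
     (\<forall>i. av (f i) \<le> 1) \<and> (\<forall>i<K. av (f i) < 1) \<and> av (f K - c) < 1"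

lemma reduction_lowest_term_lone: "reduction_lowest_term lone 0 1"
  unfolding reduction_lowest_term_def lone_def by simp

lemma reduction_lowest_term_add_small:
  assumes g: "reduction_lowest_term g K c"
    and "\<And>i. av (e i) \<le> 1" and "\<And>i. i \<le> K \<Longrightarrow> av (e i) < 1"
  shows "reduction_lowest_term (\<lambda>n. e n + g n) K c"
proof -
  have "av (e K + (g K - c)) < 1"
    using g assms(3)[of K] unfolding reduction_lowest_term_def by (intro av_add_less) simp_all
  then show ?thesis
    using g assms(2,3) unfolding reduction_lowest_term_def
    by (auto intro: av_add_le av_add_less simp: add_diff_eq)
qed

lemma gauss_norm_ge_one_if_reduction_lowest_term:
  assumes f: "in_EK av f" and "reduction_lowest_term f K c" and "av c = 1"
  shows "1 \<le> gauss_norm av f"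
proof -
  have "av (f K - c) < av c"
    using assms(2,3) unfolding reduction_lowest_term_def by simp
  then have "av (c + (f K - c)) = av c"
    by (rule av_add_eq_left)
  then have "av (f K) = 1"
    using assms(3) by simp
  then show ?thesis
    using gauss_norm_ge_coeff[OF f, of K] by simp
qed

lemma av_fact_add_le: "av (of_nat (fact (m + d))) \<le> av (of_nat (fact m))"
proof (induction d)
  case 0
  show ?case
    by simp
next
  case (Suc d)
  have "av (of_nat (fact (m + Suc d))) = av (of_nat (Suc (m + d))) * av (of_nat (fact (m + d)))"
    by (simp only: add_Suc_right fact_Suc of_nat_mult of_nat_id av_mult)
  also have "\<dots> \<le> 1 * av (of_nat (fact (m + d)))"
    by (rule mult_right_mono[OF av_of_nat_le_one av_nonneg])
  finally show ?case
    using Suc.IH by simp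
qed

lemma av_fact_mult_le:
  assumes "1 \<le> p"
  shows "av (of_nat (fact (p * m))) \<le> av (of_nat p) ^ m * av (of_nat (fact m))"
proof (induction m)
  case 0
  show ?case
    by simp
next
  case (Suc m)
  define x where "x = av (of_nat p)"
  have px: "p * Suc m = Suc (p * m + (p - 1))"
    using assms by simp
  have "of_nat (fact (p * Suc m)) = (of_nat p :: 'k) * of_nat (Suc m) * of_nat (fact (p * m + (p - 1)))"
    unfolding px fact_Suc of_nat_mult of_nat_id by (simp only: px[symmetric] of_nat_mult)
  then have "av (of_nat (fact (p * Suc m))) = x * av (of_nat (Suc m)) * av (of_nat (fact (p * m + (p - 1))))"
    unfolding x_def by simp
  also have "\<dots> \<le> x * av (of_nat (Suc m)) * av (of_nat (fact (p * m)))"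
    unfolding x_def by (rule mult_left_mono[OF av_fact_add_le]) simp
  also have "\<dots> \<le> x * av (of_nat (Suc m)) * (x ^ m * av (of_nat (fact m)))"
    unfolding x_def by (rule mult_left_mono[OF Suc.IH]) simp
  also have "\<dots> = x ^ Suc m * av (of_nat (fact (Suc m)))"
    by (simp only: fact_Suc of_nat_mult of_nat_id av_mult power_Suc mult_ac)
  finally show ?case
    unfolding x_def .
qed

lemma av_fact_power_le:
  assumes "2 \<le> p" and "0 < av (of_nat p)"
  shows "av (of_nat (fact (p ^ n))) \<le> av (of_nat p) powr ((real (p ^ n) - 1) / (real p - 1))"
proof (induction n)
  case 0
  show ?case
    using assms(2) by auto
next
  case (Suc n)
  define x e where "x = av (of_nat p)" and "e = (real (p ^ n) - 1) / (real p - 1)"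
  have "av (of_nat (fact (p ^ Suc n))) \<le> x ^ (p ^ n) * av (of_nat (fact (p ^ n)))"
    unfolding x_def using av_fact_mult_le[of p "p ^ n"] assms(1) by simp
  also have "\<dots> \<le> x ^ (p ^ n) * x powr e"
    unfolding x_def e_def by (rule mult_left_mono[OF Suc.IH]) simp
  also have "\<dots> = x powr real (p ^ n) * x powr e"
    using powr_realpow[of x "p ^ n"] assms(2) unfolding x_def by metis
  also have "\<dots> = x powr (real (p ^ n) + e)"
    by (simp only: powr_add)
  also have "real (p ^ n) + e = (real (p ^ Suc n) - 1) / (real p - 1)"
    using assms(1) unfolding e_def by (simp add: field_simps)
  finally show ?case
    unfolding x_def .
qed

end

lemma first_max_of_tendsto_zero:
  fixes w :: "nat \<Rightarrow> real"
  assumes "w \<longlonglongrightarrow> 0" and "0 < w k"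
  obtains I where "\<And>i. w i \<le> w I" and "\<And>i. i < I \<Longrightarrow> w i < w I"
proof -
  obtain N where N: "\<And>n. N \<le> n \<Longrightarrow> w n < w k"
    using LIMSEQ_D[OF assms] by (metis abs_less_iff diff_zero real_norm_def)
  define W where "W = Max (w ` {..N})"
  have "k \<le> N"
    using N[of k] by (meson less_irrefl nle_le)
  have bound: "w i \<le> W" for i
  proof (cases "i \<le> N")
    case True
    then show ?thesis
      unfolding W_def by (intro Max_ge) auto
  next
    case False
    then have "w i < w k"
      by (intro N) simp
    also have "w k \<le> W"
      unfolding W_def using \<open>k \<le> N\<close> by (intro Max_ge) auto
    finally show ?thesis
      by simp
  qed
  have "W \<in> w ` {..N}"
    unfolding W_def by (intro Max_in) auto
  then have "\<exists>I. w I = W"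
    by blast
  define I where "I = (LEAST I. w I = W)"
  have "w I = W"
    unfolding I_def using \<open>\<exists>I. w I = W\<close> by (rule LeastI_ex)
  moreover have "w i < w I" if "i < I" for i
    using not_less_Least[OF that[unfolded I_def]] bound[of i] \<open>w I = W\<close> by (simp add: I_def)
  ultimately show ?thesis
    using that bound by metis
qed

lemma weighted_first_max:
  fixes x :: "nat \<Rightarrow> real"
  assumes "\<And>i. 0 \<le> x i" and "\<And>i. x i \<le> B" and "0 < r" and "r < 1" and "0 < x k"
  obtains I where "\<And>i. x i * r ^ i \<le> x I * r ^ I" and "\<And>i. i < I \<Longrightarrow> x i * r ^ i < x I * r ^ I"
proof (rule first_max_of_tendsto_zero)
  show "(\<lambda>i. x i * r ^ i) \<longlonglongrightarrow> 0"
  proof (rule tendsto_sandwich[of "\<lambda>_. 0" _ _ "\<lambda>i. B * r ^ i"])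
    show "\<forall>\<^sub>F i in sequentially. 0 \<le> x i * r ^ i"
      using assms(1,3) by simp
    show "\<forall>\<^sub>F i in sequentially. x i * r ^ i \<le> B * r ^ i"
      using assms(2,3) by (intro always_eventually allI mult_right_mono) simp_all
    show "(\<lambda>i. B * r ^ i) \<longlonglongrightarrow> 0"
      using assms(3,4) by (intro tendsto_mult_right_zero LIMSEQ_power_zero) simp
  qed simp
  show "0 < x k * r ^ k"
    using assms(3,5) by simp
qed (use that in blast)

lemma mult_first_max_less:
  fixes w w' :: "nat \<Rightarrow> real"
  assumes "\<And>i. 0 \<le> w i" and "\<And>i. w i \<le> w I" and "\<And>i. i < I \<Longrightarrow> w i < w I"
    and "\<And>j. 0 \<le> w' j" and "\<And>j. w' j \<le> w' J" and "\<And>j. j < J \<Longrightarrow> w' j < w' J"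
    and "0 < w I" and "0 < w' J" and "i + j = I + J" and "i \<noteq> I"
  shows "w i * w' j < w I * w' J"
proof (cases "i < I")
  case True
  then have "w i * w' j \<le> w i * w' J"
    using assms(1,5) by (simp add: mult_left_mono)
  also have "\<dots> < w I * w' J"
    using True assms(3,8) by simp
  finally show ?thesis .
next
  case False
  then have "j < J"
    using assms(9,10) by linarith
  have "w i * w' j \<le> w I * w' j"
    using assms(2,4) by (simp add: mult_right_mono)
  also have "\<dots> < w I * w' J"
    using \<open>j < J\<close> assms(6,7) by simp
  finally show ?thesis .
qed

lemma root_power_ge:
  fixes t :: real
  assumes "0 < t" and "t < 1" and "k \<le> D" and "0 < D"
  shows "t \<le> root D t ^ k"
proof -
  have "root D t ^ D \<le> root D t ^ k"
    using assms by (intro power_decreasing) (simp_all add: less_imp_le)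
  then show ?thesis
    using assms by simp
qed

locale complete_nonarch_absval = nonarch_absval +
  assumes complete: "av_complete av"
begin

lemma av_sum_tendsto:
  assumes "null_at_infinity c"
  shows "av_tendsto av (\<lambda>N. \<Sum>i = - int N..int N. c i) (av_sum av c)"
proof -
  obtain L where L: "av_tendsto av (\<lambda>N. \<Sum>i = - int N..int N. c i) L"
    using spec[OF complete[unfolded av_complete_def], of "\<lambda>N. \<Sum>i = - int N..int N. c i"]
      null_at_infinity_partial_sums_Cauchy[OF assms] by blast
  moreover have "av_sum av c = L"
    unfolding av_sum_def by (intro the_equality L) (use L av_tendsto_unique in blast)
  ultimately show ?thesis
    by simp
qed

lemma av_sum_le_bound:
  assumes "null_at_infinity c" and "\<And>i. av (c i) \<le> B" and "0 \<le> B"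
  shows "av (av_sum av c) \<le> B"
proof (rule av_tendsto_le[OF av_sum_tendsto[OF assms(1)]])
  show "av (\<Sum>i = - int n..int n. c i) \<le> B" for n
    using assms(2,3) by (intro av_finite_sum_le) auto
qed

lemma av_sum_less_bound:
  assumes "null_at_infinity c" and "\<And>i. av (c i) < B"
  shows "av (av_sum av c) < B"
proof -
  have "0 < B"
    using assms(2)[of 0] av_nonneg[of "c 0"] by linarith
  then obtain N where N: "\<forall>i. int N < \<bar>i\<bar> \<longrightarrow> av (c i) < B / 2"
    using assms(1) unfolding null_at_infinity_def by (meson half_gt_zero)
  define W where "W = (\<lambda>i. av (c i)) ` {- int N..int N}"
  define B' where "B' = max (B / 2) (Max W)"
  have "finite W" "W \<noteq> {}"
    unfolding W_def by auto
  then have "B' < B"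
    unfolding B'_def W_def using \<open>0 < B\<close> assms(2) by (auto simp: Max_less_iff)
  have "av (c i) \<le> B'" for i
  proof (cases "\<bar>i\<bar> \<le> int N")
    case True
    then have "av (c i) \<in> W"
      unfolding W_def by (intro rev_image_eqI[of i]) auto
    then show ?thesis
      unfolding B'_def using \<open>finite W\<close> by (intro max.coboundedI2 Max_ge)
  next
    case False
    then have "av (c i) < B / 2"
      using N by auto
    then show ?thesis
      unfolding B'_def by simp
  qed
  then have "av (av_sum av c) \<le> B'"
    using av_sum_le_bound[OF assms(1)] \<open>0 < B\<close> unfolding B'_def by fastforce
  with \<open>B' < B\<close> show ?thesis
    by linarith
qed

lemma av_sum_remove:
  assumes "null_at_infinity c"
  shows "av_sum av c = c i0 + av_sum av (c(i0 := 0))"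
proof -
  have lim: "av_tendsto av (\<lambda>N. \<Sum>i = - int N..int N. (c(i0 := 0)) i) (av_sum av (c(i0 := 0)))"
    using av_sum_tendsto null_at_infinity_fun_upd assms by blast
  have split: "(\<Sum>i = - int N..int N. c i) = c i0 + (\<Sum>i = - int N..int N. (c(i0 := 0)) i)"
    if "nat \<bar>i0\<bar> \<le> N" for N
  proof -
    have "i0 \<in> {- int N..int N}"
      using that by auto
    then show ?thesis
      by (simp add: sum.remove[of _ i0] sum.cong[of _ _ "c(i0 := 0)" c])
  qed
  then have "av_tendsto av (\<lambda>N. \<Sum>i = - int N..int N. c i) (c i0 + av_sum av (c(i0 := 0)))"
    unfolding av_tendsto_def
  proof (intro allI impI)
    fix e :: real
    assume "0 < e"
    then obtain N where "\<forall>n\<ge>N. av ((\<Sum>i = - int n..int n. (c(i0 := 0)) i) - av_sum av (c(i0 := 0))) < e"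
      using lim unfolding av_tendsto_def by blast
    with split show "\<exists>N. \<forall>n\<ge>N. av ((\<Sum>i = - int n..int n. c i) - (c i0 + av_sum av (c(i0 := 0)))) < e"
      by (intro exI[of _ "max N (nat \<bar>i0\<bar>)"]) (simp add: algebra_simps)
  qed
  then show ?thesis
    using av_tendsto_unique av_sum_tendsto[OF assms] by blast
qed

lemma av_sum_dominant_term:
  assumes "null_at_infinity c" and "\<And>i. i \<noteq> i0 \<Longrightarrow> av (c i) < av (c i0)"
  shows "av (av_sum av c) = av (c i0)"
proof -
  have "av (c (i0 + 1)) < av (c i0)"
    by (rule assms(2)) simp
  then have "0 < av (c i0)"
    using av_nonneg[of "c (i0 + 1)"] by linarith
  then have "av ((c(i0 := 0)) i) < av (c i0)" for i
    using assms(2)[of i] by (cases "i = i0") auto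
  then have "av (av_sum av (c(i0 := 0))) < av (c i0)"
    using assms(1) null_at_infinity_fun_upd by (intro av_sum_less_bound)
  then show ?thesis
    using av_sum_remove[OF assms(1), of i0] av_add_eq_left by simp
qed

lemma null_at_infinity_lmult_terms:
  assumes f: "in_EK av f" and b: "in_EK av b"
  shows "null_at_infinity (\<lambda>i. f i * b (n - i))"
  unfolding null_at_infinity_def
proof (intro allI impI)
  fix e :: real
  assume "0 < e"
  obtain Bf Bb where Bf: "0 < Bf" "\<And>i. av (f i) \<le> Bf" and Bb: "0 < Bb" "\<And>i. av (b i) \<le> Bb"
    using in_EK_bounded[OF f] in_EK_bounded[OF b] by metis
  obtain N1 N2 where N1: "\<forall>i<N1. av (f i) < e / Bb" and N2: "\<forall>i<N2. av (b i) < e / Bf"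
    using in_EK_tail[OF f, of "e / Bb"] in_EK_tail[OF b, of "e / Bf"] \<open>0 < e\<close> Bf Bb by auto
  have "av (f i * b (n - i)) < e" if "nat (max \<bar>N1\<bar> \<bar>n - N2\<bar>) < \<bar>i\<bar>" for i
  proof (cases "i < 0")
    case True
    then have "i < N1"
      using that by linarith
    then show ?thesis
      using N1 Bb by (intro av_mult_less) auto
  next
    case False
    then have "n - i < N2"
      using that by linarith
    then have "av (b (n - i) * f i) < e"
      using N2 Bf by (intro av_mult_less) auto
    then show ?thesis
      by (simp add: mult.commute)
  qed
  then show "\<exists>N::nat. \<forall>i. int N < \<bar>i\<bar> \<longrightarrow> av (f i * b (n - i)) < e"
    by blast
qed

lemma in_EK_lmult:
  assumes f: "in_EK av f" and b: "in_EK av b"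
  shows "in_EK av (lmult av f b)"
proof -
  obtain Bf Bb where Bf: "0 < Bf" "\<And>i. av (f i) \<le> Bf" and Bb: "0 < Bb" "\<And>i. av (b i) \<le> Bb"
    using in_EK_bounded[OF f] in_EK_bounded[OF b] by metis
  have "av (lmult av f b n) \<le> Bf * Bb" for n
    unfolding lmult_def using null_at_infinity_lmult_terms[OF f b] Bf Bb
    by (intro av_sum_le_bound) (auto intro: mult_mono)
  moreover have "\<exists>N. \<forall>n<N. av (lmult av f b n) < e" if "0 < e" for e
  proof -
    obtain N1 N2 where N1: "\<forall>i<N1. av (f i) < e / Bb" and N2: "\<forall>i<N2. av (b i) < e / Bf"
      using in_EK_tail[OF f, of "e / Bb"] in_EK_tail[OF b, of "e / Bf"] \<open>0 < e\<close> Bf Bb by auto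
    have "av (lmult av f b n) < e" if "n < N1 + N2" for n
      unfolding lmult_def
    proof (intro av_sum_less_bound[OF null_at_infinity_lmult_terms[OF f b]])
      show "av (f i * b (n - i)) < e" for i
      proof (cases "i < N1")
        case True
        then show ?thesis
          using N1 Bb by (intro av_mult_less) auto
      next
        case False
        then have "av (b (n - i) * f i) < e"
          using N2 Bf \<open>n < N1 + N2\<close> by (intro av_mult_less) auto
        then show ?thesis
          by (simp add: mult.commute)
      qed
    qed
    then show ?thesis
      by blast
  qed
  ultimately show ?thesis
    unfolding in_EK_iff by blast
qed

lemma in_EK_gbr: "in_EK av a \<Longrightarrow> in_EK av (gbr av a k)"
  by (induction k) (simp_all add: in_EK_lone in_EK_add in_EK_lderiv in_EK_lmult in_EK_ldivT)

subsection \<open>Supermultiplicativity of the Gauss norm\<close>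

lemma av_lmult_at_weighted_maxima:
  fixes N :: int and I J :: nat
  assumes f: "in_EK av f" and b: "in_EK av b" and "0 < r"
    and I: "\<And>i. av (f (N + int i)) * r ^ i \<le> av (f (N + int I)) * r ^ I"
      "\<And>i. i < I \<Longrightarrow> av (f (N + int i)) * r ^ i < av (f (N + int I)) * r ^ I"
    and J: "\<And>j. av (b (N + int j)) * r ^ j \<le> av (b (N + int J)) * r ^ J"
      "\<And>j. j < J \<Longrightarrow> av (b (N + int j)) * r ^ j < av (b (N + int J)) * r ^ J"
    and pos: "0 < av (f (N + int I))" "0 < av (b (N + int J))"
    and tail_f: "\<And>i. i < N \<Longrightarrow> av (f i) * gauss_norm av b < av (f (N + int I)) * av (b (N + int J))"
    and tail_b: "\<And>j. j < N \<Longrightarrow> gauss_norm av f * av (b j) < av (f (N + int I)) * av (b (N + int J))"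
  shows "av (lmult av f b (2 * N + int I + int J)) = av (f (N + int I)) * av (b (N + int J))"
proof -
  define n where "n = 2 * N + int I + int J"
  define c where "c i = f i * b (n - i)" for i
  define u v where "u i = av (f (N + int i))" and "v j = av (b (N + int j))" for i j
  have c_shift: "av (c (N + int i)) = u i * v j" if "i + j = I + J" for i j
  proof -
    have "n - (N + int i) = N + int j"
      using that unfolding n_def by linarith
    then show ?thesis
      unfolding c_def u_def v_def by (simp only: av_mult)
  qed
  have "av (c i) < av (c (N + int I))" if "i \<noteq> N + int I" for i
  proof -
    consider "i < N" | "n - i < N" | "N \<le> i" "N \<le> n - i"
      by linarith
    then show ?thesis
    proof cases
      case 1
      have "av (c i) \<le> av (f i) * gauss_norm av b"
        unfolding c_def using gauss_norm_ge_coeff[OF b] by (simp add: mult_left_mono)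
      then show ?thesis
        using tail_f[OF 1] c_shift[OF refl] unfolding u_def v_def by linarith
    next
      case 2
      have "av (c i) \<le> gauss_norm av f * av (b (n - i))"
        unfolding c_def using gauss_norm_ge_coeff[OF f] by (simp add: mult_right_mono)
      then show ?thesis
        using tail_b[OF 2] c_shift[OF refl] unfolding u_def v_def by linarith
    next
      case 3
      define i' j' where "i' = nat (i - N)" and "j' = nat (n - i - N)"
      have "i' + j' = I + J" "i = N + int i'"
        using 3 unfolding i'_def j'_def n_def by linarith+
      moreover have "i' \<noteq> I"
        using that \<open>i = N + int i'\<close> by auto
      ultimately have "(u i' * r ^ i') * (v j' * r ^ j') < (u I * r ^ I) * (v J * r ^ J)"
        using I J pos \<open>0 < r\<close>
        by (intro mult_first_max_less[where w = "\<lambda>i. u i * r ^ i" and w' = "\<lambda>j. v j * r ^ j"])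
          (simp_all add: u_def v_def)
      moreover have "av (c i) * r ^ (I + J) = (u i' * r ^ i') * (v j' * r ^ j')"
        unfolding \<open>i = N + int i'\<close> c_shift[OF \<open>i' + j' = I + J\<close>] \<open>i' + j' = I + J\<close>[symmetric] power_add
        by (simp add: algebra_simps)
      moreover have "av (c (N + int I)) * r ^ (I + J) = (u I * r ^ I) * (v J * r ^ J)"
        unfolding c_shift[OF refl] power_add by (simp add: algebra_simps)
      ultimately have "av (c i) * r ^ (I + J) < av (c (N + int I)) * r ^ (I + J)"
        by simp
      then show ?thesis
        using \<open>0 < r\<close> by simp
    qed
  qed
  then have "av (lmult av f b n) = av (c (N + int I))"
    unfolding lmult_def c_def
    by (intro av_sum_dominant_term null_at_infinity_lmult_terms[OF f b]) simp
  then show ?thesis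
    using c_shift[OF refl] unfolding n_def u_def v_def by simp
qed

text \<open>
  The Gauss norm need not be attained. Weighting the shifted coefficients by \<open>r\<^sup>i\<close> with
  \<open>r < 1\<close> makes the weighted maxima exist, and taking \<open>r\<close> close to \<open>1\<close> keeps them
  close to the Gauss norms.
\<close>
lemma ex_lmult_coeff_ge_of_weighted_bounds:
  fixes N :: int and K L :: nat
  assumes f: "in_EK av f" and b: "in_EK av b" and "0 < r" and "r < 1" and "0 < s" and "\<delta> < s ^ 2"
    and F: "0 < gauss_norm av f" and G: "0 < gauss_norm av b"
    and K: "s * gauss_norm av f \<le> av (f (N + int K)) * r ^ K"
    and L: "s * gauss_norm av b \<le> av (b (N + int L)) * r ^ L"
    and tail_f: "\<And>i. i < N \<Longrightarrow> av (f i) \<le> \<delta> * gauss_norm av f"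
    and tail_b: "\<And>j. j < N \<Longrightarrow> av (b j) \<le> \<delta> * gauss_norm av b"
  shows "\<exists>n. s ^ 2 * gauss_norm av f * gauss_norm av b \<le> av (lmult av f b n)"
proof -
  define F G where "F = gauss_norm av f" and "G = gauss_norm av b"
  define u v where "u i = av (f (N + int i))" and "v j = av (b (N + int j))" for i j
  have u_le: "u i \<le> F" and v_le: "v j \<le> G" for i j
    unfolding u_def v_def F_def G_def using gauss_norm_ge_coeff f b by blast+
  have "0 < s * F" "0 < s * G"
    using \<open>0 < s\<close> F G unfolding F_def G_def by simp_all
  then have "0 < u K * r ^ K" "0 < v L * r ^ L"
    using K L unfolding u_def v_def F_def G_def by linarith+
  then have "0 < u K" "0 < v L"
    using zero_less_power[OF \<open>0 < r\<close>] by (auto intro: zero_less_mult_pos2)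
  obtain I where I: "\<And>i. u i * r ^ i \<le> u I * r ^ I" "\<And>i. i < I \<Longrightarrow> u i * r ^ i < u I * r ^ I"
    using weighted_first_max[of u, OF _ u_le \<open>0 < r\<close> \<open>r < 1\<close> \<open>0 < u K\<close>]
    unfolding u_def by auto
  obtain J where J: "\<And>j. v j * r ^ j \<le> v J * r ^ J" "\<And>j. j < J \<Longrightarrow> v j * r ^ j < v J * r ^ J"
    using weighted_first_max[of v, OF _ v_le \<open>0 < r\<close> \<open>r < 1\<close> \<open>0 < v L\<close>]
    unfolding v_def by auto
  have uI: "s * F \<le> u I * r ^ I" and vJ: "s * G \<le> v J * r ^ J"
    using K L I(1)[of K] J(1)[of L] unfolding u_def v_def F_def G_def by linarith+
  then have "0 < u I * r ^ I" "0 < v J * r ^ J"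
    using \<open>0 < s * F\<close> \<open>0 < s * G\<close> by linarith+
  then have "0 < u I" "0 < v J"
    using zero_less_power[OF \<open>0 < r\<close>] by (auto intro: zero_less_mult_pos2)
  have "s ^ 2 * F * G = (s * F) * (s * G)"
    by (simp add: power2_eq_square algebra_simps)
  also have "\<dots> \<le> (u I * r ^ I) * (v J * r ^ J)"
    using \<open>0 < u I * r ^ I\<close> \<open>0 < s * G\<close> by (intro mult_mono[OF uI vJ]) simp_all
  also have "\<dots> = (u I * v J) * r ^ (I + J)"
    by (simp add: power_add algebra_simps)
  also have "\<dots> \<le> u I * v J"
    using \<open>0 < r\<close> \<open>r < 1\<close> by (intro mult_right_le_one_le power_le_one) (simp_all add: u_def v_def)
  finally have main: "s ^ 2 * F * G \<le> u I * v J" .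
  have "0 < F * G"
    using F G unfolding F_def G_def by simp
  then have small: "\<delta> * F * G < u I * v J"
    using mult_strict_right_mono[OF \<open>\<delta> < s ^ 2\<close> \<open>0 < F * G\<close>] main by (simp add: mult.assoc)
  have "av (f i) * G < u I * v J" if "i < N" for i
  proof -
    have "av (f i) * G \<le> \<delta> * F * G"
      using tail_f[OF that] G unfolding F_def G_def by (simp add: mult_right_mono)
    then show ?thesis
      using small by linarith
  qed
  moreover have "F * av (b j) < u I * v J" if "j < N" for j
  proof -
    have "F * av (b j) \<le> F * (\<delta> * G)"
      using tail_b[OF that] F unfolding F_def G_def by (simp add: mult_left_mono)
    then show ?thesis
      using small by (simp add: algebra_simps)
  qed
  ultimately have "av (lmult av f b (2 * N + int I + int J)) = u I * v J"
    unfolding u_def v_def F_def G_def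
    by (intro av_lmult_at_weighted_maxima[OF f b \<open>0 < r\<close> I[unfolded u_def] J[unfolded v_def]
          \<open>0 < u I\<close>[unfolded u_def] \<open>0 < v J\<close>[unfolded v_def]])
  then show ?thesis
    using main unfolding F_def G_def by (intro exI[of _ "2 * N + int I + int J"]) simp
qed

lemma ex_lmult_coeff_ge_gauss_norm_mult:
  assumes f: "in_EK av f" and b: "in_EK av b" and "0 < t" and "t < 1"
    and F: "0 < gauss_norm av f" and G: "0 < gauss_norm av b"
  shows "\<exists>n. t ^ 4 * gauss_norm av f * gauss_norm av b \<le> av (lmult av f b n)"
proof -
  define F G where "F = gauss_norm av f" and "G = gauss_norm av b"
  define \<delta> where "\<delta> = t ^ 4 / 2"
  have "t ^ 4 \<le> t"
    using power_decreasing[of 1 4 t] \<open>0 < t\<close> \<open>t < 1\<close> by simp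
  then have "0 < \<delta>" "\<delta> < (t ^ 2) ^ 2" "\<delta> \<le> t"
    using \<open>0 < t\<close> unfolding \<delta>_def by simp_all
  obtain N where tail_f: "\<forall>i<N. av (f i) < \<delta> * F" and tail_b: "\<forall>i<N. av (b i) < \<delta> * G"
    using in_EK_tail[OF f, of "\<delta> * F"] in_EK_tail[OF b, of "\<delta> * G"] \<open>0 < \<delta>\<close> F G
    unfolding F_def G_def by (metis min.strict_boundedE zero_less_mult_iff)
  obtain i1 where i1: "t * F < av (f i1)"
    using gauss_norm_less_coeff[OF f, of "t * F"] F \<open>t < 1\<close> unfolding F_def by auto
  obtain j1 where j1: "t * G < av (b j1)"
    using gauss_norm_less_coeff[OF b, of "t * G"] G \<open>t < 1\<close> unfolding G_def by auto
  have "\<delta> * F \<le> t * F" "\<delta> * G \<le> t * G"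
    using \<open>\<delta> \<le> t\<close> F G unfolding F_def G_def by simp_all
  then have "N \<le> i1" "N \<le> j1"
    using tail_f tail_b i1 j1 by (meson not_le order.strict_trans order_le_less_trans)+
  define r where "r = root (nat (i1 - N) + nat (j1 - N) + 1) t"
  have "0 < r" "r < 1"
    unfolding r_def using \<open>0 < t\<close> \<open>t < 1\<close> by (simp_all add: real_root_gt_zero)
  have K: "t ^ 2 * gauss_norm av f \<le> av (f (N + int (nat (i1 - N)))) * r ^ nat (i1 - N)"
    unfolding r_def power2_eq_square using i1 \<open>N \<le> i1\<close> \<open>0 < t\<close> \<open>t < 1\<close> F_def
    by (subst mult.assoc, subst mult.commute, intro mult_mono root_power_ge) simp_all
  have L: "t ^ 2 * gauss_norm av b \<le> av (b (N + int (nat (j1 - N)))) * r ^ nat (j1 - N)"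
    unfolding r_def power2_eq_square using j1 \<open>N \<le> j1\<close> \<open>0 < t\<close> \<open>t < 1\<close> G_def
    by (subst mult.assoc, subst mult.commute, intro mult_mono root_power_ge) simp_all
  have "\<And>i. i < N \<Longrightarrow> av (f i) \<le> \<delta> * gauss_norm av f" "\<And>j. j < N \<Longrightarrow> av (b j) \<le> \<delta> * gauss_norm av b"
    using tail_f tail_b unfolding F_def G_def by (simp_all add: less_imp_le)
  from ex_lmult_coeff_ge_of_weighted_bounds[OF f b \<open>0 < r\<close> \<open>r < 1\<close> _ \<open>\<delta> < (t ^ 2) ^ 2\<close> F G K L this]
  show ?thesis
    using \<open>0 < t\<close> by (simp flip: power_mult)
qed

lemma gauss_norm_lmult_ge:
  assumes f: "in_EK av f" and b: "in_EK av b"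
  shows "gauss_norm av f * gauss_norm av b \<le> gauss_norm av (lmult av f b)"
proof (cases "0 < gauss_norm av f \<and> 0 < gauss_norm av b")
  case True
  show ?thesis
  proof (rule field_le_mult_one_interval)
    fix s :: real
    assume "0 < s" "s < 1"
    then have "0 < root 4 s" "root 4 s < 1" "root 4 s ^ 4 = s"
      by (simp_all add: real_root_gt_zero)
    then obtain n where "s * gauss_norm av f * gauss_norm av b \<le> av (lmult av f b n)"
      using ex_lmult_coeff_ge_gauss_norm_mult[OF f b \<open>0 < root 4 s\<close> \<open>root 4 s < 1\<close>] True by auto
    also have "\<dots> \<le> gauss_norm av (lmult av f b)"
      by (rule gauss_norm_ge_coeff[OF in_EK_lmult[OF f b]])
    finally show "s * (gauss_norm av f * gauss_norm av b) \<le> gauss_norm av (lmult av f b)"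
      by (simp add: mult.assoc)
  qed
next
  case False
  then have "gauss_norm av f = 0 \<or> gauss_norm av b = 0"
    using gauss_norm_nonneg[OF f] gauss_norm_nonneg[OF b] by auto
  then show ?thesis
    using gauss_norm_nonneg[OF in_EK_lmult[OF f b]] by auto
qed

subsection \<open>Lower bound for the norms of \<open>g_[k]\<close>\<close>

lemma gauss_norm_gbr_ge_power:
  assumes a: "in_EK av a" and big: "1 < gauss_norm av (ldivT a)"
  shows "gauss_norm av (ldivT a) ^ k \<le> gauss_norm av (gbr av a k)"
proof (induction k)
  case 0
  show ?case
    using gauss_norm_ge_coeff[OF in_EK_lone, of 0] by (simp add: lone_def)
next
  case (Suc k)
  define f M where "f = gbr av a k" and "M = gauss_norm av (ldivT a)"
  have f: "in_EK av f" and b: "in_EK av (ldivT a)"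
    unfolding f_def using in_EK_gbr in_EK_ldivT a by blast+
  have "0 < M ^ k"
    using big unfolding M_def by simp
  then have "0 < gauss_norm av f"
    using Suc.IH unfolding f_def M_def by linarith
  have "gauss_norm av (lderiv f) \<le> gauss_norm av f"
    using gauss_norm_ge_coeff[OF f] av_lderiv_le by (intro gauss_norm_le) (blast intro: order_trans)
  also have "\<dots> < gauss_norm av f * M"
    using \<open>0 < gauss_norm av f\<close> big unfolding M_def by simp
  also have "\<dots> \<le> gauss_norm av (lmult av f (ldivT a))"
    unfolding M_def by (rule gauss_norm_lmult_ge[OF f b])
  finally have "gauss_norm av (gbr av a (Suc k)) = gauss_norm av (lmult av f (ldivT a))"
    unfolding f_def gbr.simps by (intro gauss_norm_add_dominant in_EK_lderiv in_EK_lmult a b in_EK_gbr)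
  moreover have "M ^ Suc k \<le> gauss_norm av f * M"
    using Suc.IH big unfolding f_def M_def by (simp add: mult.commute mult_right_mono)
  ultimately show ?case
    using \<open>gauss_norm av f * M \<le> gauss_norm av (lmult av f (ldivT a))\<close> unfolding M_def by linarith
qed

lemma reduction_lowest_term_lmult:
  assumes f: "in_EK av f" and b: "in_EK av b"
    and rf: "reduction_lowest_term f K c" and rb: "reduction_lowest_term b L d"
  shows "reduction_lowest_term (lmult av f b) (K + L) (c * d)"
proof -
  have f1: "av (f i) \<le> 1" and b1: "av (b i) \<le> 1" for i
    using rf rb unfolding reduction_lowest_term_def by blast+
  have less: "av (f i * b (n - i)) < 1" if "i < K \<or> n - i < L" for i n
  proof (cases "i < K")
    case True
    then have "av (f i) < 1"
      using rf unfolding reduction_lowest_term_def by blast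
    then show ?thesis
      using b1 by (rule av_mult_less_one)
  next
    case False
    then have "av (b (n - i)) < 1"
      using that rb unfolding reduction_lowest_term_def by blast
    then have "av (b (n - i) * f i) < 1"
      using f1 by (rule av_mult_less_one)
    then show ?thesis
      by (simp add: mult.commute)
  qed
  have terms: "null_at_infinity (\<lambda>i. f i * b (n - i))" for n
    by (rule null_at_infinity_lmult_terms[OF f b])
  have "av (lmult av f b n) \<le> 1" for n
    unfolding lmult_def using terms f1 b1 by (intro av_sum_le_bound) (simp_all add: mult_le_one)
  moreover have "av (lmult av f b n) < 1" if "n < K + L" for n
    unfolding lmult_def using that by (intro av_sum_less_bound terms less) linarith
  moreover have "av (lmult av f b (K + L) - c * d) < 1"
  proof -
    define rest where "rest = (\<lambda>i. f i * b (K + L - i))(K := 0)"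
    have "av (rest i) < 1" for i
      unfolding rest_def using less[of i "K + L"] by (cases "i < K") auto
    then have "av (av_sum av rest) < 1"
      unfolding rest_def using terms null_at_infinity_fun_upd by (intro av_sum_less_bound) blast+
    moreover have "av c \<le> 1"
    proof -
      have "av c = av (f K - (f K - c))"
        by simp
      also have "\<dots> \<le> max (av (f K)) (av (f K - c))"
        by (rule av_diff_le_max)
      also have "\<dots> \<le> 1"
        using f1[of K] rf unfolding reduction_lowest_term_def by simp
      finally show ?thesis .
    qed
    moreover have "lmult av f b (K + L) - c * d = (f K - c) * b L + c * (b L - d) + av_sum av rest"
      unfolding lmult_def rest_def using av_sum_remove[OF terms, of "K + L" K]
      by (simp add: algebra_simps)
    ultimately show ?thesis
      using rf rb b1 unfolding reduction_lowest_term_def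
      by (auto intro!: av_add_less av_mult_less_one simp: mult.commute[of c])
  qed
  ultimately show ?thesis
    unfolding reduction_lowest_term_def by blast
qed

lemma reduction_lowest_term_gbr:
  assumes a: "in_EK av a" and r: "reduction_lowest_term (ldivT a) L d" and "L \<le> -2"
  shows "reduction_lowest_term (gbr av a k) (int k * L) (d ^ k)"
proof (induction k)
  case 0
  show ?case
    using reduction_lowest_term_lone by simp
next
  case (Suc k)
  define f where "f = gbr av a k"
  have "reduction_lowest_term (lmult av f (ldivT a)) (int k * L + L) (d ^ k * d)"
    unfolding f_def using Suc.IH r a by (intro reduction_lowest_term_lmult in_EK_gbr in_EK_ldivT)
  moreover have "av (lderiv f i) \<le> 1" for i
    using order_trans[OF av_lderiv_le] Suc.IH unfolding f_def reduction_lowest_term_def by blast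
  moreover have "av (lderiv f i) < 1" if "i \<le> int k * L + L" for i
  proof -
    have "i + 1 < int k * L"
      using that \<open>L \<le> -2\<close> by linarith
    then have "av (f (i + 1)) < 1"
      using Suc.IH unfolding f_def reduction_lowest_term_def by blast
    then show ?thesis
      using av_lderiv_le[of f i] by linarith
  qed
  ultimately have "reduction_lowest_term (\<lambda>n. lderiv f n + lmult av f (ldivT a) n) (int k * L + L) (d ^ k * d)"
    by (rule reduction_lowest_term_add_small)
  then show ?case
    unfolding f_def by (simp add: algebra_simps)
qed

lemma gauss_norm_gbr_ge_one:
  assumes a: "in_EK av a" and "j \<le> -1" and "1 \<le> av (a j)"
  shows "1 \<le> gauss_norm av (gbr av a k)"
proof (cases "\<exists>i. 1 < av (a i)")
  case True
  then obtain i where "1 < av (a i)"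
    by blast
  then have "1 < gauss_norm av (ldivT a)"
    using gauss_norm_ge_coeff[OF in_EK_ldivT[OF a], of "i - 1"] by (simp add: ldivT_def)
  then have "1 \<le> gauss_norm av (ldivT a) ^ k"
    by (intro one_le_power) simp
  then show ?thesis
    using gauss_norm_gbr_ge_power[OF a \<open>1 < gauss_norm av (ldivT a)\<close>, of k] by linarith
next
  case False
  then have le1: "av (a i) \<le> 1" for i
    by (simp add: not_less)
  obtain m where "m \<le> j" "1 \<le> av (a m)" and below: "\<And>i. i < m \<Longrightarrow> av (a i) < 1"
    using in_EK_least_index[OF a zero_less_one \<open>1 \<le> av (a j)\<close>] by blast
  then have "av (a m) = 1"
    using le1[of m] by simp
  have "reduction_lowest_term (ldivT a) (m - 1) (a m)"
    unfolding reduction_lowest_term_def ldivT_def using le1 below by simp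
  then have "reduction_lowest_term (gbr av a k) (int k * (m - 1)) (a m ^ k)"
    using \<open>m \<le> j\<close> \<open>j \<le> -1\<close> by (intro reduction_lowest_term_gbr a) (assumption, linarith)
  then show ?thesis
    by (rule gauss_norm_ge_one_if_reduction_lowest_term[OF in_EK_gbr[OF a]]) (simp add: \<open>av (a m) = 1\<close>)
qed

end

section \<open>The radius of convergence\<close>

lemma powr_neg_inverse_le:
  fixes g a x :: real
  assumes "1 \<le> g" and "0 < a" and "a \<le> x powr ((real k - 1) / (real p - 1))" and "1 \<le> k"
  shows "(g / a) powr (- 1 / real k) \<le> x powr ((1 - 1 / real k) / (real p - 1))"
proof -
  have "(g / a) powr (- 1 / real k) \<le> (1 / a) powr (- 1 / real k)"
    using assms(1,2) by (intro powr_mono2') (simp_all add: divide_right_mono)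
  also have "\<dots> = a powr (1 / real k)"
    using assms(2) by (simp add: powr_def ln_div)
  also have "\<dots> \<le> (x powr ((real k - 1) / (real p - 1))) powr (1 / real k)"
    using assms(2,3) by (intro powr_mono2) simp_all
  also have "\<dots> = x powr ((1 - 1 / real k) / (real p - 1))"
    using assms(4) by (simp add: powr_powr field_simps)
  finally show ?thesis .
qed

lemma ray_le_if_gauss_norm_gbr_ge_one:
  fixes av :: "'k::field_char_0 \<Rightarrow> real"
  assumes av: "nonarch_av av" and gbr: "\<And>k. 1 \<le> gauss_norm av (gbr av a k)" and "2 \<le> p"
  shows "ray av a \<le> ereal (av (of_nat p) powr (1 / (real p - 1)))"
proof -
  interpret nonarch_absval av
    by (rule nonarch_absval.intro[OF av])
  define x where "x = av (of_nat p :: 'k)"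
  have "0 < x"
    unfolding x_def using \<open>2 \<le> p\<close> by (intro av_pos) simp
  define X where "X k = (if gauss_norm av (gbr av a k) = 0 then \<infinity>
      else ereal ((gauss_norm av (gbr av a k) / av (of_nat (fact k) :: 'k)) powr (- 1 / real k)))" for k
  define \<sigma> where "\<sigma> n = p ^ Suc n" for n
  define Y where "Y n = x powr ((1 - 1 / real (\<sigma> n)) / (real p - 1))" for n
  have "strict_mono \<sigma>"
    unfolding \<sigma>_def using \<open>2 \<le> p\<close> by (intro strict_monoI) simp
  have "X (\<sigma> n) \<le> ereal (Y n)" for n
  proof -
    define g c where "g = gauss_norm av (gbr av a (\<sigma> n))" and "c = av (of_nat (fact (\<sigma> n)) :: 'k)"
    have "1 \<le> \<sigma> n"
      unfolding \<sigma>_def using \<open>2 \<le> p\<close> by simp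
    have "0 < c"
      unfolding c_def by (intro av_pos) simp
    have "c \<le> x powr ((real (\<sigma> n) - 1) / (real p - 1))"
      unfolding c_def x_def \<sigma>_def using av_fact_power_le[OF \<open>2 \<le> p\<close>, of "Suc n"] \<open>0 < x\<close>
      unfolding x_def by simp
    then have "(g / c) powr (- 1 / real (\<sigma> n)) \<le> Y n"
      unfolding Y_def g_def using gbr \<open>0 < c\<close> \<open>1 \<le> \<sigma> n\<close> by (intro powr_neg_inverse_le) simp_all
    moreover have "X (\<sigma> n) = ereal ((g / c) powr (- 1 / real (\<sigma> n)))"
      unfolding X_def g_def c_def using gbr[of "\<sigma> n"] by simp
    ultimately show ?thesis
      by simp
  qed
  have "(\<lambda>n. 1 / real (\<sigma> n)) \<longlonglongrightarrow> 0"
    using LIMSEQ_subseq_LIMSEQ[OF lim_inverse_n' \<open>strict_mono \<sigma>\<close>] by (simp add: comp_def)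
  then have "Y \<longlonglongrightarrow> x powr ((1 - 0) / (real p - 1))"
    unfolding Y_def using \<open>0 < x\<close> \<open>2 \<le> p\<close> by (intro tendsto_intros) simp_all
  have "liminf X \<le> liminf (X \<circ> \<sigma>)"
    by (rule liminf_subseq_mono[OF \<open>strict_mono \<sigma>\<close>])
  also have "\<dots> \<le> liminf (\<lambda>n. ereal (Y n))"
    using \<open>\<And>n. X (\<sigma> n) \<le> ereal (Y n)\<close> by (intro Liminf_mono always_eventually) simp
  also have "\<dots> = ereal (x powr (1 / (real p - 1)))"
    using \<open>Y \<longlonglongrightarrow> x powr ((1 - 0) / (real p - 1))\<close>
    by (intro lim_imp_Liminf trivial_limit_sequentially tendsto_ereal) simp
  finally show ?thesis
    unfolding ray_def X_def x_def by (simp add: min.coboundedI2)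
qed

theorem lemma2p1p3:
  fixes av :: "'k::field_char_0 \<Rightarrow> real" and p :: nat and a :: "int \<Rightarrow> 'k"
  assumes "nonarch_av av" and "av_complete av"
    and "prime p" and "av (of_nat p) < 1"
    and "in_EK av a"
    and "ray av a > ereal (av (of_nat p) powr (1 / (real p - 1)))"
  shows "\<forall>i \<le> -1. av (a i) < 1"
proof (rule ccontr)
  interpret complete_nonarch_absval av
    using assms(1,2) by unfold_locales
  assume "\<not> (\<forall>i \<le> -1. av (a i) < 1)"
  then obtain j where "j \<le> -1" and "1 \<le> av (a j)"
    by (auto simp: not_less)
  then have "1 \<le> gauss_norm av (gbr av a k)" for k
    using gauss_norm_gbr_ge_one[OF assms(5)] by blast
  then have "ray av a \<le> ereal (av (of_nat p) powr (1 / (real p - 1)))"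
    using ray_le_if_gauss_norm_gbr_ge_one[OF assms(1)] prime_ge_2_nat[OF assms(3)] by blast
  with assms(6) show False
    by simp
qed

end
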